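(* Let $(T,A,m|_A)$ be a nonsingular open dynamical system with $m(A_\infty)=0$, fix $\alpha\in(0,1)$ and a finite measurable partition $\{B_1,\dots,B_n\}$ of $A$, and let $\hat A$, $\hat C$, $\hat{\mathbf c}$ and $(\hat D_{n,\alpha})$ be as in the context. If $x_1,\dots,x_n$ are positive numbers satisfying $$x_i^{1+\alpha}=\alpha\,\frac{\sum_j\hat C_{ij}x_j+\hat c_i}{\sum_k\hat C_{ki}x_k^{-\alpha}}\qquad(1\le i\le n),$$ and $\lambda_0^*\in\mathbb R$ satisfies $e^{\alpha\lambda_0^*-1}\sum_{i,j}\hat C_{ij}x_jx_i^{-\alpha}=\alpha$, then $\lambda^*=(\lambda_0^*,\lambda_1^*,\dots,\lambda_n^* )$ with $\lambda_i^*:=\log(x_i)-\lambda_0^*$ ($1\le i\le n$) solves $(\hat D_{n,\alpha})$.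
   Context: Let $(X,m)$ be a measure space, $A\subsetneq X$ measurable and $T:A\to X$ measurable such that: $H_0:=T(A)\setminus A$ is measurable; $m(A\cap T^{-1}H_0)>0$; $m(E)>0$ whenever $E\subseteq X$ is measurable with $m(T^{-1}E)>0$; and $T$ is locally finite-to-one (a nonsingular open dynamical system). Preimages are taken in $A$. $A_n=\{x:x,T(x),\dots,T^n(x)\in A\}$, $A_\infty=\bigcap_nA_n$, $H_1=A\setminus A_1$. $\mathbf 1_{A_1}\psi\circ T$ is $\psi\circ T$ on $A_1$ and $0$ elsewhere in $A$. With $\psi_j=\mathbf 1_{B_j}$ define $\mathcal M^*\lambda=\lambda_0\mathbf 1_{A_1}+\sum_{j=1}^n\lambda_j(\mathbf 1_{A_1}\psi_j\circ T-\alpha\psi_j)$ for $\lambda\in\mathbb R^{n+1}$; the reduced domain $\hat A$ is $A$ with the support of every $\mathcal M^*\lambda$ having $\lambda_0=0$ and $\mathcal M^*\lambda\le0$ $m$-a.e. removed (it is a union of partition sets $B_k$). Let $\hat m=m|_{\hat A}$, $\hat C_{kj}=\hat m(B_k\cap T^{-1}B_j)$ and $\hat c_k=\hat m(H_1\cap B_k)$. The problem $(\hat D_{n,\alpha})$ is: maximize over $\lambda\in\mathbb R^{n+1}$ $$\hat Q(\lambda)=\alpha\lambda_0-\int_{\hat A}\exp(\mathcal M^*\lambda-1)\,dm=\alpha\lambda_0-\sum_{j,k}\exp(\lambda_0-1+\lambda_j-\alpha\lambda_k)\hat C_{kj}-\sum_k\exp(-1-\alpha\lambda_k)\hat c_k.$$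 *)

theory Defs
  imports "HOL-Analysis.Analysis"
begin

text \<open>Nonsingular open dynamical system (T, A, m|A) inside the measure space (space M, M).
  T is a total HOL function, but only its values on A matter.\<close>
definition open_dyn_system :: "'a measure \<Rightarrow> 'a set \<Rightarrow> ('a \<Rightarrow> 'a) \<Rightarrow> bool" where
  "open_dyn_system M A T \<longleftrightarrow>
     A \<in> sets M \<and> A \<subset> space M \<and>
     T \<in> measurable (restrict_space M A) M \<and>
     T ` A - A \<in> sets M \<and>
     emeasure M (A \<inter> T -` (T ` A - A)) > 0 \<and>
     (\<forall>E \<in> sets M. emeasure M (A \<inter> T -` E) > 0 \<longrightarrow> emeasure M E > 0) \<and>
     (\<forall>y. finite (A \<inter> T -` {y}))"

definition An :: "('a \<Rightarrow> 'a) \<Rightarrow> 'a set \<Rightarrow> nat \<Rightarrow> 'a set" where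
  "An T A n = {x. \<forall>i\<le>n. (T ^^ i) x \<in> A}"

definition Ainf :: "('a \<Rightarrow> 'a) \<Rightarrow> 'a set \<Rightarrow> 'a set" where
  "Ainf T A = (\<Inter>n. An T A n)"

definition H1 :: "('a \<Rightarrow> 'a) \<Rightarrow> 'a set \<Rightarrow> 'a set" where
  "H1 T A = A - An T A 1"

text \<open>M^* lambda, lambda = (lambda_0,...,lambda_n) encoded as nat => real, psi_j = indicator of B j.\<close>
definition Mstar :: "('a \<Rightarrow> 'a) \<Rightarrow> 'a set \<Rightarrow> (nat \<Rightarrow> 'a set) \<Rightarrow> nat \<Rightarrow> real
    \<Rightarrow> (nat \<Rightarrow> real) \<Rightarrow> 'a \<Rightarrow> real" where
  "Mstar T A B n \<alpha> l x =
     (if x \<in> An T A 1 then l 0 else 0) +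
     (\<Sum>j\<in>{1..n}. l j * ((if x \<in> An T A 1 then indicator (B j) (T x) else 0)
                          - \<alpha> * indicator (B j) x))"

definition Ahat :: "'a measure \<Rightarrow> ('a \<Rightarrow> 'a) \<Rightarrow> 'a set \<Rightarrow> (nat \<Rightarrow> 'a set) \<Rightarrow> nat \<Rightarrow> real \<Rightarrow> 'a set" where
  "Ahat M T A B n \<alpha> = A - \<Union>{ {x \<in> A. Mstar T A B n \<alpha> l x \<noteq> 0} | l.
        l 0 = 0 \<and> (AE x in M. x \<in> A \<longrightarrow> Mstar T A B n \<alpha> l x \<le> 0) }"

definition Chat_set :: "'a measure \<Rightarrow> ('a \<Rightarrow> 'a) \<Rightarrow> 'a set \<Rightarrow> (nat \<Rightarrow> 'a set) \<Rightarrow> nat \<Rightarrow> real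
    \<Rightarrow> nat \<Rightarrow> nat \<Rightarrow> 'a set" where
  "Chat_set M T A B n \<alpha> k j = Ahat M T A B n \<alpha> \<inter> B k \<inter> (A \<inter> T -` B j)"

definition chat_set :: "'a measure \<Rightarrow> ('a \<Rightarrow> 'a) \<Rightarrow> 'a set \<Rightarrow> (nat \<Rightarrow> 'a set) \<Rightarrow> nat \<Rightarrow> real
    \<Rightarrow> nat \<Rightarrow> 'a set" where
  "chat_set M T A B n \<alpha> k = Ahat M T A B n \<alpha> \<inter> H1 T A \<inter> B k"

definition Chat where
  "Chat M T A B n \<alpha> k j = measure M (Chat_set M T A B n \<alpha> k j)"

definition chat where
  "chat M T A B n \<alpha> k = measure M (chat_set M T A B n \<alpha> k)"

definition Qhat :: "'a measure \<Rightarrow> ('a \<Rightarrow> 'a) \<Rightarrow> 'a set \<Rightarrow> (nat \<Rightarrow> 'a set) \<Rightarrow> nat \<Rightarrow> real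
    \<Rightarrow> (nat \<Rightarrow> real) \<Rightarrow> real" where
  "Qhat M T A B n \<alpha> l =
     \<alpha> * l 0
     - (\<Sum>j\<in>{1..n}. \<Sum>k\<in>{1..n}. exp (l 0 - 1 + l j - \<alpha> * l k) * Chat M T A B n \<alpha> k j)
     - (\<Sum>k\<in>{1..n}. exp (- 1 - \<alpha> * l k) * chat M T A B n \<alpha> k)"

text \<open>lambda solves (hat D_{n,alpha}): it maximizes Qhat over R^{n+1}
  (only the coordinates 0..n of a function nat => real matter).\<close>
definition solves_Dhat where
  "solves_Dhat M T A B n \<alpha> l \<longleftrightarrow> (\<forall>\<mu>. Qhat M T A B n \<alpha> \<mu> \<le> Qhat M T A B n \<alpha> l)"

end

theory Submission
  imports Defs
begin

text \<open>The objective \<open>Q\<close> of the dual problem is concave, being minus a sum of exponentials of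
  affine functions of \<open>\<lambda>\<close> with nonnegative coefficients. Hence it lies below each of its tangent
  planes, and a stationary point is a global maximiser. At \<open>\<lambda>\<^sup>*\<close> every exponential factors as
  \<open>exp (\<alpha> \<lambda>\<^sub>0\<^sup>* - 1) x\<^sub>j x\<^sub>k powr (-\<alpha>)\<close>, and the two stationarity conditions become exactly the
  equation for \<open>\<lambda>\<^sub>0\<^sup>*\<close> and the fixed-point equations for the \<open>x\<^sub>i\<close>.\<close>

definition trans_weight :: "real \<Rightarrow> (nat \<Rightarrow> nat \<Rightarrow> real) \<Rightarrow> (nat \<Rightarrow> real) \<Rightarrow> nat \<Rightarrow> nat \<Rightarrow> real" where
  "trans_weight \<alpha> C l k j = exp (l 0 - 1 + l j - \<alpha> * l k) * C k j"

definition exit_weight :: "real \<Rightarrow> (nat \<Rightarrow> real) \<Rightarrow> (nat \<Rightarrow> real) \<Rightarrow> nat \<Rightarrow> real" where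
  "exit_weight \<alpha> c l k = exp (- 1 - \<alpha> * l k) * c k"

definition dual_obj :: "real \<Rightarrow> nat set \<Rightarrow> (nat \<Rightarrow> nat \<Rightarrow> real) \<Rightarrow> (nat \<Rightarrow> real) \<Rightarrow> (nat \<Rightarrow> real) \<Rightarrow> real" where
  "dual_obj \<alpha> I C c l = \<alpha> * l 0 - (\<Sum>j\<in>I. \<Sum>k\<in>I. trans_weight \<alpha> C l k j)
     - (\<Sum>k\<in>I. exit_weight \<alpha> c l k)"

lemma Qhat_eq_dual_obj:
  "Qhat M T A B n \<alpha> l = dual_obj \<alpha> {1..n} (Chat M T A B n \<alpha>) (chat M T A B n \<alpha>) l"
  by (simp add: Qhat_def dual_obj_def trans_weight_def exit_weight_def)

lemma exp_ge_tangent: "exp a + exp a * (b - a) \<le> exp (b :: real)"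
proof -
  have "exp a * (1 + (b - a)) \<le> exp a * exp (b - a)"
    using exp_ge_add_one_self[of "b - a"] by (intro mult_left_mono) auto
  then show ?thesis by (simp add: algebra_simps exp_diff)
qed

lemma dual_obj_le_tangent:
  fixes \<alpha> :: real and C :: "nat \<Rightarrow> nat \<Rightarrow> real" and c l \<mu> :: "nat \<Rightarrow> real"
  assumes C_nonneg: "\<And>k j. 0 \<le> C k j" and c_nonneg: "\<And>k. 0 \<le> c k"
  defines "d \<equiv> \<lambda>i. \<mu> i - l i"
    and "w \<equiv> trans_weight \<alpha> C l" and "v \<equiv> exit_weight \<alpha> c l"
  shows "dual_obj \<alpha> I C c \<mu> \<le> dual_obj \<alpha> I C c l + d 0 * (\<alpha> - (\<Sum>j\<in>I. \<Sum>k\<in>I. w k j))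
    - (\<Sum>m\<in>I. d m * ((\<Sum>k\<in>I. w k m) - \<alpha> * ((\<Sum>j\<in>I. w m j) + v m)))"
proof -
  have trans_ge: "w k j * (1 + d 0 + d j - \<alpha> * d k) \<le> trans_weight \<alpha> C \<mu> k j" for k j
    using exp_ge_tangent[of "l 0 - 1 + l j - \<alpha> * l k" "\<mu> 0 - 1 + \<mu> j - \<alpha> * \<mu> k"]
      mult_right_mono[OF _ C_nonneg]
    by (fastforce simp: w_def d_def trans_weight_def algebra_simps)
  have exit_ge: "v k * (1 - \<alpha> * d k) \<le> exit_weight \<alpha> c \<mu> k" for k
    using exp_ge_tangent[of "- 1 - \<alpha> * l k" "- 1 - \<alpha> * \<mu> k"] mult_right_mono[OF _ c_nonneg]
    by (fastforce simp: v_def d_def exit_weight_def algebra_simps)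
  have swap: "(\<Sum>j\<in>I. \<Sum>k\<in>I. w k j * d k) = (\<Sum>m\<in>I. d m * (\<Sum>j\<in>I. w m j))"
    by (subst sum.swap) (simp add: sum_distrib_left mult_ac)
  have "(\<Sum>j\<in>I. \<Sum>k\<in>I. w k j * (1 + d 0 + d j - \<alpha> * d k))
      = (1 + d 0) * (\<Sum>j\<in>I. \<Sum>k\<in>I. w k j) + (\<Sum>m\<in>I. d m * (\<Sum>k\<in>I. w k m))
        - \<alpha> * (\<Sum>j\<in>I. \<Sum>k\<in>I. w k j * d k)"
    by (simp add: algebra_simps sum.distrib sum_subtractf sum_distrib_left)
  moreover have "(\<Sum>k\<in>I. v k * (1 - \<alpha> * d k)) = (\<Sum>k\<in>I. v k) - \<alpha> * (\<Sum>m\<in>I. d m * v m)"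
    by (simp add: algebra_simps sum_subtractf sum_distrib_left)
  moreover have "(\<Sum>j\<in>I. \<Sum>k\<in>I. w k j * (1 + d 0 + d j - \<alpha> * d k))
      \<le> (\<Sum>j\<in>I. \<Sum>k\<in>I. trans_weight \<alpha> C \<mu> k j)"
    by (intro sum_mono trans_ge)
  moreover have "(\<Sum>k\<in>I. v k * (1 - \<alpha> * d k)) \<le> (\<Sum>k\<in>I. exit_weight \<alpha> c \<mu> k)"
    by (intro sum_mono exit_ge)
  moreover have "\<mu> 0 = l 0 + d 0"
    by (simp add: d_def)
  ultimately show ?thesis
    unfolding dual_obj_def w_def[symmetric] v_def[symmetric] swap
    by (simp add: algebra_simps sum.distrib sum_subtractf sum_distrib_left)
qed

lemma dual_obj_le_at_stationary:
  assumes "\<And>k j. 0 \<le> C k j" "\<And>k. 0 \<le> c k"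
    and stat0: "(\<Sum>j\<in>I. \<Sum>k\<in>I. trans_weight \<alpha> C l k j) = \<alpha>"
    and stat: "\<And>m. m \<in> I \<Longrightarrow>
      (\<Sum>k\<in>I. trans_weight \<alpha> C l k m) = \<alpha> * ((\<Sum>j\<in>I. trans_weight \<alpha> C l m j) + exit_weight \<alpha> c l m)"
  shows "dual_obj \<alpha> I C c \<mu> \<le> dual_obj \<alpha> I C c l"
proof -
  have "(\<Sum>m\<in>I. (\<mu> m - l m) * ((\<Sum>k\<in>I. trans_weight \<alpha> C l k m)
      - \<alpha> * ((\<Sum>j\<in>I. trans_weight \<alpha> C l m j) + exit_weight \<alpha> c l m))) = 0"
    using stat by simp
  with dual_obj_le_tangent[where C = C and c = c and \<alpha> = \<alpha> and l = l and \<mu> = \<mu> and I = I] assms(1,2) stat0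
  show ?thesis by simp
qed

context
  fixes \<alpha> l0 :: real and x :: "nat \<Rightarrow> real"
begin

definition lambda_star :: "nat \<Rightarrow> real" where
  "lambda_star i = (if i = 0 then l0 else ln (x i) - l0)"

lemma trans_weight_lambda_star:
  assumes "j \<noteq> 0" "k \<noteq> 0" "0 < x j" "0 < x k"
  shows "trans_weight \<alpha> C lambda_star k j = exp (\<alpha> * l0 - 1) * (C k j * x j * x k powr (- \<alpha>))"
proof -
  have "lambda_star 0 - 1 + lambda_star j - \<alpha> * lambda_star k
      = (\<alpha> * l0 - 1) + ln (x j) + (- \<alpha>) * ln (x k)"
    using assms by (simp add: lambda_star_def algebra_simps)
  then have "exp (lambda_star 0 - 1 + lambda_star j - \<alpha> * lambda_star k)
      = exp (\<alpha> * l0 - 1) * exp (ln (x j)) * exp ((- \<alpha>) * ln (x k))"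
    by (simp only: exp_add)
  then show ?thesis
    using assms by (simp add: trans_weight_def powr_def)
qed

lemma exit_weight_lambda_star:
  assumes "k \<noteq> 0" "0 < x k"
  shows "exit_weight \<alpha> c lambda_star k = exp (\<alpha> * l0 - 1) * (c k * x k powr (- \<alpha>))"
proof -
  have "- 1 - \<alpha> * lambda_star k = (\<alpha> * l0 - 1) + (- \<alpha>) * ln (x k)"
    using assms by (simp add: lambda_star_def algebra_simps)
  then have "exp (- 1 - \<alpha> * lambda_star k) = exp (\<alpha> * l0 - 1) * exp ((- \<alpha>) * ln (x k))"
    by (simp only: exp_add)
  then show ?thesis
    using assms by (simp add: exit_weight_def powr_def)
qed

lemma dual_obj_le_lambda_star:
  assumes I: "0 \<notin> I" and C_nonneg: "\<And>k j. 0 \<le> C k j" and c_nonneg: "\<And>k. 0 \<le> c k"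
    and x_pos: "\<forall>i\<in>I. 0 < x i"
    and x_eq: "\<forall>i\<in>I. x i powr (1 + \<alpha>) =
        \<alpha> * ((\<Sum>j\<in>I. C i j * x j) + c i) / (\<Sum>k\<in>I. C k i * x k powr (- \<alpha>))"
    and l0_eq: "exp (\<alpha> * l0 - 1) * (\<Sum>i\<in>I. \<Sum>j\<in>I. C i j * x j * x i powr (- \<alpha>)) = \<alpha>"
  shows "dual_obj \<alpha> I C c \<mu> \<le> dual_obj \<alpha> I C c lambda_star"
proof (rule dual_obj_le_at_stationary[OF C_nonneg c_nonneg])
  define E where "E = exp (\<alpha> * l0 - 1)"
  have w: "trans_weight \<alpha> C lambda_star k j = E * (C k j * x j * x k powr (- \<alpha>))"
    if "j \<in> I" "k \<in> I" for j k
    using that I x_pos trans_weight_lambda_star by (metis E_def)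
  have v: "exit_weight \<alpha> c lambda_star k = E * (c k * x k powr (- \<alpha>))" if "k \<in> I" for k
    using that I x_pos exit_weight_lambda_star by (metis E_def)
  show "(\<Sum>j\<in>I. \<Sum>k\<in>I. trans_weight \<alpha> C lambda_star k j) = \<alpha>"
    using l0_eq by (subst sum.swap) (simp add: w E_def sum_distrib_left)
  fix m assume m: "m \<in> I"
  define D where "D = (\<Sum>k\<in>I. C k m * x k powr (- \<alpha>))"
  have xm: "0 < x m" using m x_pos by auto
  have fixpoint: "x m powr (1 + \<alpha>) = \<alpha> * ((\<Sum>j\<in>I. C m j * x j) + c m) / D"
    using x_eq m by (simp add: D_def)
  \<comment> \<open>\<open>D \<noteq> 0\<close> because otherwise the right-hand side of the fixed-point equation is \<open>x / 0 = 0\<close>.\<close>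
  then have "D \<noteq> 0" using xm by auto
  then have fixpoint': "x m powr (1 + \<alpha>) * D = \<alpha> * ((\<Sum>j\<in>I. C m j * x j) + c m)"
    using fixpoint by (simp add: field_simps)
  have "(\<Sum>k\<in>I. trans_weight \<alpha> C lambda_star k m) = E * x m powr (- \<alpha>) * (x m powr (1 + \<alpha>) * D)"
    using m xm by (simp add: w D_def sum_distrib_left powr_add[symmetric] mult_ac)
  also have "\<dots> = E * x m powr (- \<alpha>) * (\<alpha> * ((\<Sum>j\<in>I. C m j * x j) + c m))"
    by (simp only: fixpoint')
  also have "\<dots> = \<alpha> * ((\<Sum>j\<in>I. trans_weight \<alpha> C lambda_star m j) + exit_weight \<alpha> c lambda_star m)"
    using m by (simp add: w v sum_distrib_left algebra_simps)
  finally show "(\<Sum>k\<in>I. trans_weight \<alpha> C lambda_star k m)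
      = \<alpha> * ((\<Sum>j\<in>I. trans_weight \<alpha> C lambda_star m j) + exit_weight \<alpha> c lambda_star m)" .
qed

end

theorem lemma7:
  fixes M :: "'a measure" and A :: "'a set" and T :: "'a \<Rightarrow> 'a"
    and B :: "nat \<Rightarrow> 'a set" and n :: nat and \<alpha> :: real
    and x :: "nat \<Rightarrow> real" and l0 :: real
  assumes sys: "open_dyn_system M A T"
    and Ainf_null: "Ainf T A \<in> null_sets M"
    and alpha: "0 < \<alpha>" "\<alpha> < 1"
    and B_meas: "\<forall>k\<in>{1..n}. B k \<in> sets M"
    and B_disj: "disjoint_family_on B {1..n}"
    and B_cover: "(\<Union>k\<in>{1..n}. B k) = A"
    and C_fin: "\<forall>k\<in>{1..n}. \<forall>j\<in>{1..n}. emeasure M (Chat_set M T A B n \<alpha> k j) < \<infinity>"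
    and c_fin: "\<forall>k\<in>{1..n}. emeasure M (chat_set M T A B n \<alpha> k) < \<infinity>"
    and x_pos: "\<forall>i\<in>{1..n}. 0 < x i"
    and x_eq: "\<forall>i\<in>{1..n}. x i powr (1 + \<alpha>) =
        \<alpha> * ((\<Sum>j\<in>{1..n}. Chat M T A B n \<alpha> i j * x j) + chat M T A B n \<alpha> i)
          / (\<Sum>k\<in>{1..n}. Chat M T A B n \<alpha> k i * x k powr (- \<alpha>))"
    and l0_eq: "exp (\<alpha> * l0 - 1) *
        (\<Sum>i\<in>{1..n}. \<Sum>j\<in>{1..n}. Chat M T A B n \<alpha> i j * x j * x i powr (- \<alpha>)) = \<alpha>"
  shows "solves_Dhat M T A B n \<alpha> (\<lambda>i. if i = 0 then l0 else ln (x i) - l0)"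
proof -
  have "Qhat M T A B n \<alpha> \<mu> \<le> Qhat M T A B n \<alpha> (lambda_star l0 x)" for \<mu>
    unfolding Qhat_eq_dual_obj
    by (rule dual_obj_le_lambda_star) (use x_pos x_eq l0_eq in \<open>auto simp: Chat_def chat_def\<close>)
  then show ?thesis
    by (simp add: solves_Dhat_def lambda_star_def[abs_def])
qed

end
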